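(* Consider the following data structure on a fully dynamic unweighted graph, for a parameter $0<\epsilon<1/2$. It stores a matching $M$, a counter $t$, and has access (via an oracle) to a vertex cover $V_{cover}$ of the current graph of size at most twice the size of a maximum matching of the current graph. Initially $M$ is a $(1+\epsilon/4)$-MCM of the initial graph (empty if the graph is empty) and $t=\frac{\epsilon}{4}|M|$. On each update (insertion or deletion of edge $(u,v)$): if the update deletes an edge $(u,v)\in M$, remove it from $M$; set $t\leftarrow t-1$; if $t\le 0$, construct a core subgraph $G'$ of the current graph using $V_{cover}$, set $M$ to a $(1+\epsilon/4)$-MCM of $G'$ computed by a static algorithm running in $O(|E(G')|\epsilon^{-1})$ time, and set $t\leftarrow\frac{\epsilon}{4}|M|$. Then after every update $M$ is a $(1+\epsilon)$-MCM of the current graph, and the amortized cost per update is $O(\sqrt{m}\,\epsilon^{-2})$.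
   Context: A fully dynamic graph undergoes a sequence of single-edge insertions and deletions; $m$ is the number of edges. A matching $M$ of a graph $H$ is a $(1+\delta)$-MCM if $|M|\ge\frac{1}{1+\delta}$ times the maximum matching size of $H$. A vertex cover is a vertex set meeting every edge. Given a graph $G=(V,E)$ and a vertex cover $V_{cover}$, a core subgraph consists of all edges with both endpoints in $V_{cover}$ together with, for each $v\in V_{cover}$, up to $|V_{cover}|+1$ arbitrary edges from $v$ to $V\setminus V_{cover}$ (all of them if fewer exist); it can be built in $O(|V_{cover}|^2)$ time. *)

theory Defs
  imports Complex_Main
begin

definition graph :: "'v set set \<Rightarrow> bool" where
  "graph E \<longleftrightarrow> finite E \<and> (\<forall>e\<in>E. card e = 2)"

definition matching :: "'v set set \<Rightarrow> bool" where
  "matching M \<longleftrightarrow> (\<forall>e1\<in>M. \<forall>e2\<in>M. e1 \<noteq> e2 \<longrightarrow> e1 \<inter> e2 = {})"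

definition matching_of :: "'v set set \<Rightarrow> 'v set set \<Rightarrow> bool" where
  "matching_of M E \<longleftrightarrow> M \<subseteq> E \<and> matching M"

definition mm_size :: "'v set set \<Rightarrow> nat" where
  "mm_size E = Max {card M | M. matching_of M E}"

definition approx_mcm :: "real \<Rightarrow> 'v set set \<Rightarrow> 'v set set \<Rightarrow> bool" where
  "approx_mcm \<delta> M E \<longleftrightarrow> matching_of M E \<and> real (card M) \<ge> real (mm_size E) / (1 + \<delta>)"

definition vertex_cover :: "'v set \<Rightarrow> 'v set set \<Rightarrow> bool" where
  "vertex_cover C E \<longleftrightarrow> finite C \<and> (\<forall>e\<in>E. e \<inter> C \<noteq> {})"

definition core_subgraph :: "'v set \<Rightarrow> 'v set set \<Rightarrow> 'v set set \<Rightarrow> bool" where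
  "core_subgraph C E H \<longleftrightarrow>
     (\<exists>S :: 'v \<Rightarrow> 'v set set.
        (\<forall>v\<in>C. S v \<subseteq> {e\<in>E. v \<in> e \<and> \<not> e \<subseteq> C} \<and>
               card (S v) = min (card {e\<in>E. v \<in> e \<and> \<not> e \<subseteq> C}) (card C + 1)) \<and>
        H = {e\<in>E. e \<subseteq> C} \<union> (\<Union>v\<in>C. S v))"

text \<open>Whether update number Suc i (from G i to G (Suc i)) triggers a rebuild.\<close>
definition rebuild :: "(nat \<Rightarrow> real) \<Rightarrow> nat \<Rightarrow> bool" where
  "rebuild t i \<longleftrightarrow> t i - 1 \<le> 0"

text \<open>G i: graph after i updates; M i, t i: stored matching and counter after i updates;
  Vc i: vertex cover returned by the oracle, H i: core subgraph built (used at rebuilds).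
  All choices (oracle answer, core subgraph, static MCM) are arbitrary within spec.\<close>
definition run ::
  "real \<Rightarrow> nat \<Rightarrow> (nat \<Rightarrow> 'v set set) \<Rightarrow> (nat \<Rightarrow> 'v set set) \<Rightarrow> (nat \<Rightarrow> real)
   \<Rightarrow> (nat \<Rightarrow> 'v set) \<Rightarrow> (nat \<Rightarrow> 'v set set) \<Rightarrow> bool" where
  "run \<epsilon> k G M t Vc H \<longleftrightarrow>
     (\<forall>i\<le>k. graph (G i)) \<and>
     (\<forall>i<k. \<exists>e. card e = 2 \<and>
        ((e \<notin> G i \<and> G (Suc i) = insert e (G i)) \<or> (e \<in> G i \<and> G (Suc i) = G i - {e}))) \<and>
     approx_mcm (\<epsilon>/4) (M 0) (G 0) \<and> t 0 = \<epsilon>/4 * real (card (M 0)) \<and>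
     (\<forall>i<k.
        (if rebuild t i then
           vertex_cover (Vc (Suc i)) (G (Suc i)) \<and>
           card (Vc (Suc i)) \<le> 2 * mm_size (G (Suc i)) \<and>
           core_subgraph (Vc (Suc i)) (G (Suc i)) (H (Suc i)) \<and>
           approx_mcm (\<epsilon>/4) (M (Suc i)) (H (Suc i)) \<and>
           t (Suc i) = \<epsilon>/4 * real (card (M (Suc i)))
         else
           M (Suc i) = M i - (G i - G (Suc i)) \<and> t (Suc i) = t i - 1))"

text \<open>Cost of update number Suc i: O(1) bookkeeping, plus at a rebuild the cost
  of building the core subgraph, min(|Vc|^2, current m), and of the static
  algorithm, |E(G')| / eps.\<close>
definition update_cost ::
  "real \<Rightarrow> (nat \<Rightarrow> 'v set set) \<Rightarrow> (nat \<Rightarrow> real) \<Rightarrow> (nat \<Rightarrow> 'v set) \<Rightarrow> (nat \<Rightarrow> 'v set set)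
   \<Rightarrow> nat \<Rightarrow> real" where
  "update_cost \<epsilon> G t Vc H i =
     1 + (if rebuild t i
          then real (min ((card (Vc (Suc i)))^2) (card (G (Suc i)))) + real (card (H (Suc i))) / \<epsilon>
          else 0)"

end

theory Submission
  imports Defs
begin

text \<open>
  A core subgraph preserves the maximum matching size: an edge of a matching that leaves the
  core has an endpoint v in the cover C, and of the |C| + 1 stored edges at v at most |C| can be
  blocked by the rest of the matching, since every matching edge meets C; so the edge can be
  swapped for a stored one. Hence right after a rebuild M is a (1 + \<epsilon>/4)-MCM of the whole
  graph, and during the following \<epsilon>/4 |M| updates each update lowers |M| and raises the
  maximum matching size by at most one, which the invariant \<mu> + 3t \<le> (1 + \<epsilon>)|M| absorbs.

  A rebuild costs O(\<mu> \<surd>m / \<epsilon>), where \<mu> is the maximum matching size, because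
  |C| \<le> 2\<mu>, the core has O(min(m, |C|^2)) edges and min(a, b) \<le> \<surd>(ab). The potential
  (\<surd>m / \<epsilon>) max(0, \<mu> - 9t/(2\<epsilon>)) vanishes after a rebuild, grows by O(\<surd>m / \<epsilon>^2)
  per update, and pays for the next rebuild, at which t \<le> 1.
\<close>

lemma matching_subset: "matching M \<Longrightarrow> N \<subseteq> M \<Longrightarrow> matching N"
  unfolding matching_def by blast

lemma matching_insert:
  assumes "matching N" and "\<And>g. g \<in> N \<Longrightarrow> g \<noteq> f \<Longrightarrow> f \<inter> g = {}"
  shows "matching (insert f N)"
  using assms unfolding matching_def by (metis inf_commute insert_iff)

lemma finite_matching_sizes: "finite E \<Longrightarrow> finite {card M | M. matching_of M E}"
proof -
  assume "finite E"
  have "{card M | M. matching_of M E} \<subseteq> card ` Pow E"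
    by (auto simp: matching_of_def)
  then show ?thesis
    using \<open>finite E\<close> by (meson finite_Pow_iff finite_imageI finite_subset)
qed

lemma mm_size_attained:
  assumes "finite E"
  obtains M where "matching_of M E" and "card M = mm_size E"
proof -
  have "matching_of {} E"
    by (simp add: matching_of_def matching_def)
  then have "{card M | M. matching_of M E} \<noteq> {}"
    by blast
  then show thesis
    using Max_in[OF finite_matching_sizes[OF assms]] that unfolding mm_size_def by auto
qed

lemma card_le_mm_size: "finite E \<Longrightarrow> matching_of M E \<Longrightarrow> card M \<le> mm_size E"
  unfolding mm_size_def by (rule Max_ge[OF finite_matching_sizes]) auto

lemma card_2_eq_doubleton:
  assumes "card f = 2" and "x \<in> f" and "y \<in> f" and "x \<noteq> y"
  shows "f = {x, y}"
proof -
  have "finite f"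
    using assms(1) by (metis card.infinite zero_neq_numeral)
  moreover have "{x, y} \<subseteq> f" and "card {x, y} = card f"
    using assms by simp_all
  ultimately show ?thesis
    by (metis card_subset_eq)
qed

lemma card_le_Suc_card_Diff_singleton: "card A \<le> Suc (card (A - {x}))"
  using card_Diff_singleton_if[of A x] by (auto split: if_splits)

lemma mm_size_le_remove_edge:
  assumes "finite A" and "finite B" and "A - {e} \<subseteq> B"
  shows "mm_size A \<le> mm_size B + 1"
proof -
  obtain M where M: "matching_of M A" "card M = mm_size A"
    using \<open>finite A\<close> by (rule mm_size_attained)
  have "matching_of (M - {e}) B"
    using M(1) assms(3) matching_subset[of M "M - {e}"] unfolding matching_of_def by blast
  then have "card (M - {e}) \<le> mm_size B"
    by (rule card_le_mm_size[OF \<open>finite B\<close>])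
  then show ?thesis
    using M(2) card_le_Suc_card_Diff_singleton[of M e] by linarith
qed

lemma approx_mcm_supergraph:
  assumes "0 \<le> \<delta>" and "approx_mcm \<delta> M H" and "H \<subseteq> E" and "mm_size E \<le> mm_size H"
  shows "approx_mcm \<delta> M E"
proof -
  have "real (mm_size E) / (1 + \<delta>) \<le> real (mm_size H) / (1 + \<delta>)"
    using assms(1,4) by (simp add: divide_right_mono)
  then show ?thesis
    using assms(2,3) unfolding approx_mcm_def matching_of_def by auto
qed

lemma core_subgraph_subset: "core_subgraph C E H \<Longrightarrow> H \<subseteq> E"
  unfolding core_subgraph_def by blast

lemma card_matching_le_card_cover:
  assumes "matching N" and "finite C" and "\<And>g. g \<in> N \<Longrightarrow> g \<inter> C \<noteq> {}"
  shows "card N \<le> card C"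
proof -
  define pick where "pick g = (SOME c. c \<in> g \<inter> C)" for g
  have pick: "pick g \<in> g \<inter> C" if "g \<in> N" for g
    using assms(3)[OF that] unfolding pick_def by (metis ex_in_conv someI_ex)
  have "inj_on pick N"
  proof (rule inj_onI)
    fix g1 g2 assume "g1 \<in> N" "g2 \<in> N" "pick g1 = pick g2"
    then have "g1 \<inter> g2 \<noteq> {}"
      using pick by (metis IntD1 disjoint_iff)
    then show "g1 = g2"
      using assms(1) \<open>g1 \<in> N\<close> \<open>g2 \<in> N\<close> unfolding matching_def by blast
  qed
  moreover have "pick ` N \<subseteq> C"
    using pick by blast
  ultimately show ?thesis
    using assms(2) by (rule card_inj_on_le)
qed

lemma card_star_le_card_blocking:
  assumes "v \<in> C"
    and star: "\<And>f. f \<in> S \<Longrightarrow> card f = 2 \<and> v \<in> f \<and> \<not> f \<subseteq> C"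
    and "finite N" and blocking: "\<And>g. g \<in> N \<Longrightarrow> card g = 2 \<and> g \<inter> C \<noteq> {} \<and> v \<notin> g"
    and blocked: "\<And>f. f \<in> S \<Longrightarrow> \<exists>g\<in>N. f \<inter> g \<noteq> {}"
  shows "card S \<le> card N"
proof -
  define block where "block f = (SOME g. g \<in> N \<and> f \<inter> g \<noteq> {})" for f
  have block: "block f \<in> N \<and> f \<inter> block f \<noteq> {}" if "f \<in> S" for f
    unfolding block_def using blocked[OF that] by (rule someI2_bex) blast
  \<comment> \<open>f = {v, a} meets its blocking edge in a \<notin> C, and an edge meeting C has at most one vertex outside C\<close>
  have "inj_on block S"
  proof (rule inj_onI)
    fix f1 f2 assume f1: "f1 \<in> S" and f2: "f2 \<in> S" and same: "block f1 = block f2"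
    define g where "g = block f1"
    obtain a1 where a1: "a1 \<in> f1" "a1 \<in> g" using block[OF f1] g_def by blast
    obtain a2 where a2: "a2 \<in> f2" "a2 \<in> g" using block[OF f2] same g_def by blast
    have g: "card g = 2" "g \<inter> C \<noteq> {}" "v \<notin> g"
      using blocking block[OF f1] g_def by auto
    have f1_eq: "f1 = {v, a1}" and f2_eq: "f2 = {v, a2}"
      using star[OF f1] star[OF f2] a1 a2 g(3) by (metis card_2_eq_doubleton)+
    show "f1 = f2"
    proof (rule ccontr)
      assume "f1 \<noteq> f2"
      then have "g = {a1, a2}"
        using f1_eq f2_eq a1 a2 g(1) by (metis card_2_eq_doubleton)
      then show False
        using g(2) f1_eq f2_eq star[OF f1] star[OF f2] \<open>v \<in> C\<close> by auto
    qed
  qed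
  moreover have "block ` S \<subseteq> N"
    using block by blast
  ultimately show ?thesis
    using \<open>finite N\<close> by (rule card_inj_on_le)
qed

lemma core_subgraph_full_star:
  assumes "core_subgraph C E H" and "finite E" and "e \<in> E - H" and "v \<in> e" and "v \<in> C"
  obtains S where "S \<subseteq> H" and "e \<notin> S" and "card S = card C + 1"
    and "\<And>f. f \<in> S \<Longrightarrow> f \<in> E \<and> v \<in> f \<and> \<not> f \<subseteq> C"
proof -
  define A where "A = {f\<in>E. v \<in> f \<and> \<not> f \<subseteq> C}"
  obtain S where S: "\<And>v. v \<in> C \<Longrightarrow> S v \<subseteq> {f\<in>E. v \<in> f \<and> \<not> f \<subseteq> C} \<and>
        card (S v) = min (card {f\<in>E. v \<in> f \<and> \<not> f \<subseteq> C}) (card C + 1)"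
    and H: "H = {f\<in>E. f \<subseteq> C} \<union> (\<Union>v\<in>C. S v)"
    using \<open>core_subgraph C E H\<close> unfolding core_subgraph_def by blast
  have "S v \<subseteq> A" and card_S: "card (S v) = min (card A) (card C + 1)"
    using S[OF \<open>v \<in> C\<close>] unfolding A_def by auto
  moreover have "e \<in> A - S v"
    using assms(3-5) H unfolding A_def by blast
  moreover have "finite A"
    using \<open>finite E\<close> unfolding A_def by simp
  ultimately have "card (S v) < card A"
    by (metis DiffD1 DiffD2 psubsetI psubset_card_mono)
  then have "card (S v) = card C + 1"
    using card_S by linarith
  moreover have "S v \<subseteq> H"
    using H \<open>v \<in> C\<close> by blast
  ultimately show thesis
    using that \<open>S v \<subseteq> A\<close> \<open>e \<in> A - S v\<close> unfolding A_def by blast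
qed

lemma core_subgraph_exchange:
  assumes "graph E" and "vertex_cover C E" and "core_subgraph C E H"
    and N: "matching_of N E" and "e \<in> N" and "e \<notin> H"
  shows "\<exists>f\<in>H - N. matching_of (insert f (N - {e})) E"
proof (rule ccontr)
  assume no_exchange: "\<not> ?thesis"
  have edge: "\<And>f. f \<in> E \<Longrightarrow> card f = 2" and "finite E"
    using \<open>graph E\<close> unfolding graph_def by auto
  have cover: "\<And>f. f \<in> E \<Longrightarrow> f \<inter> C \<noteq> {}" and "finite C"
    using \<open>vertex_cover C E\<close> unfolding vertex_cover_def by auto
  have "N \<subseteq> E" and "matching N" and "finite N"
    using N \<open>finite E\<close> unfolding matching_of_def by (auto intro: finite_subset)
  have "e \<in> E"
    using \<open>N \<subseteq> E\<close> \<open>e \<in> N\<close> by blast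
  then obtain v where "v \<in> e" "v \<in> C"
    using cover by blast
  obtain S where "S \<subseteq> H" "e \<notin> S" "card S = card C + 1"
    and star: "\<And>f. f \<in> S \<Longrightarrow> f \<in> E \<and> v \<in> f \<and> \<not> f \<subseteq> C"
    using core_subgraph_full_star[OF \<open>core_subgraph C E H\<close> \<open>finite E\<close> _ \<open>v \<in> e\<close> \<open>v \<in> C\<close>]
      \<open>e \<in> E\<close> \<open>e \<notin> H\<close> by blast
  have blocked: "\<exists>g\<in>N - {e}. f \<inter> g \<noteq> {}" if "f \<in> S" for f
  proof (rule ccontr)
    assume free: "\<not> (\<exists>g\<in>N - {e}. f \<inter> g \<noteq> {})"
    have "f \<in> E" "f \<in> H" "f \<noteq> e"
      using that star \<open>S \<subseteq> H\<close> \<open>e \<notin> S\<close> by blast+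
    moreover have "f \<inter> f \<noteq> {}"
      using edge[OF \<open>f \<in> E\<close>] by (metis card.empty inf.idem zero_neq_numeral)
    ultimately have "f \<in> H - N"
      using free by blast
    moreover have "matching (N - {e})"
      using \<open>matching N\<close> by (rule matching_subset) blast
    then have "matching (insert f (N - {e}))"
      using free by (intro matching_insert) blast+
    ultimately show False
      using no_exchange \<open>N \<subseteq> E\<close> \<open>f \<in> E\<close> unfolding matching_of_def by blast
  qed
  have "card S \<le> card (N - {e})"
  proof (rule card_star_le_card_blocking[OF \<open>v \<in> C\<close>])
    show "card f = 2 \<and> v \<in> f \<and> \<not> f \<subseteq> C" if "f \<in> S" for f
      using that star edge by blast
    show "card g = 2 \<and> g \<inter> C \<noteq> {} \<and> v \<notin> g" if "g \<in> N - {e}" for g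
      using that \<open>N \<subseteq> E\<close> edge cover \<open>matching N\<close> \<open>e \<in> N\<close> \<open>v \<in> e\<close>
      unfolding matching_def by blast
  qed (use \<open>finite N\<close> blocked in auto)
  also have "\<dots> \<le> card N"
    using \<open>finite N\<close> by (rule card_mono) blast
  also have "\<dots> \<le> card C"
    using \<open>matching N\<close> \<open>finite C\<close> cover \<open>N \<subseteq> E\<close> by (intro card_matching_le_card_cover) blast+
  finally show False
    using \<open>card S = card C + 1\<close> by linarith
qed

lemma matching_of_core_subgraph:
  assumes "graph E" and "vertex_cover C E" and "core_subgraph C E H" and "matching_of N E"
  shows "\<exists>N'. matching_of N' H \<and> card N' = card N"
  using assms(4)
proof (induction "card (N - H)" arbitrary: N rule: less_induct)
  case less
  have "finite N"
    using less.prems \<open>graph E\<close> unfolding matching_of_def graph_def by (meson finite_subset)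
  show ?case
  proof (cases "N \<subseteq> H")
    case True
    then show ?thesis
      using less.prems unfolding matching_of_def by blast
  next
    case False
    then obtain e where "e \<in> N" "e \<notin> H"
      by blast
    then obtain f where f: "f \<in> H - N" "matching_of (insert f (N - {e})) E"
      using core_subgraph_exchange[OF assms(1-3) less.prems] by blast
    have "insert f (N - {e}) - H = (N - H) - {e}"
      using f(1) by blast
    then have "card (insert f (N - {e}) - H) < card (N - H)"
      using \<open>e \<in> N\<close> \<open>e \<notin> H\<close> \<open>finite N\<close> by (metis DiffI card_Diff1_less finite_Diff)
    moreover have "card (insert f (N - {e})) = card N"
    proof -
      have "card (insert f (N - {e})) = Suc (card (N - {e}))"
        using f(1) \<open>finite N\<close> by simp
      also have "\<dots> = card N"
        using \<open>finite N\<close> \<open>e \<in> N\<close> by (rule card_Suc_Diff1)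
      finally show ?thesis .
    qed
    ultimately show ?thesis
      using less.hyps f(2) by metis
  qed
qed

lemma mm_size_le_core_subgraph:
  assumes "graph E" and "vertex_cover C E" and "core_subgraph C E H"
  shows "mm_size E \<le> mm_size H"
proof -
  have "finite E"
    using \<open>graph E\<close> unfolding graph_def by simp
  then obtain N where N: "matching_of N E" "card N = mm_size E"
    by (rule mm_size_attained)
  then obtain N' where "matching_of N' H" "card N' = mm_size E"
    using matching_of_core_subgraph[OF assms] by metis
  moreover have "finite H"
    using core_subgraph_subset[OF \<open>core_subgraph C E H\<close>] \<open>finite E\<close> by (rule finite_subset)
  ultimately show ?thesis
    using card_le_mm_size by metis
qed

lemma card_core_subgraph_le:
  assumes "graph E" and "finite C" and "core_subgraph C E H"
  shows "card H \<le> 3 * card C ^ 2"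
proof -
  obtain S where S: "\<forall>v\<in>C. S v \<subseteq> {f\<in>E. v \<in> f \<and> \<not> f \<subseteq> C} \<and>
        card (S v) = min (card {f\<in>E. v \<in> f \<and> \<not> f \<subseteq> C}) (card C + 1)"
    and H: "H = {f\<in>E. f \<subseteq> C} \<union> (\<Union>v\<in>C. S v)"
    using \<open>core_subgraph C E H\<close> unfolding core_subgraph_def by blast
  have "{f\<in>E. f \<subseteq> C} \<subseteq> (\<lambda>(x, y). {x, y}) ` (C \<times> C)"
  proof
    fix f assume f: "f \<in> {f\<in>E. f \<subseteq> C}"
    then obtain x y where "f = {x, y}"
      using \<open>graph E\<close> unfolding graph_def by (metis (no_types, lifting) card_2_iff mem_Collect_eq)
    with f show "f \<in> (\<lambda>(x, y). {x, y}) ` (C \<times> C)"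
      by auto
  qed
  then have "card {f\<in>E. f \<subseteq> C} \<le> card ((\<lambda>(x, y). {x, y}) ` (C \<times> C))"
    using \<open>finite C\<close> by (intro card_mono) simp_all
  also have "\<dots> \<le> card (C \<times> C)"
    using \<open>finite C\<close> by (intro card_image_le) simp
  finally have inner: "card {f\<in>E. f \<subseteq> C} \<le> card C ^ 2"
    by (simp add: card_cartesian_product power2_eq_square)
  have "card (\<Union>v\<in>C. S v) \<le> (\<Sum>v\<in>C. card (S v))"
    by (rule card_UN_le[OF \<open>finite C\<close>])
  also have "\<dots> \<le> card C * (card C + 1)"
    using S sum_bounded_above[of C "\<lambda>v. card (S v)" "card C + 1"] by (simp add: mult.commute)
  finally have stars: "card (\<Union>v\<in>C. S v) \<le> card C * (card C + 1)" .
  have "card H \<le> card {f\<in>E. f \<subseteq> C} + card (\<Union>v\<in>C. S v)"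
    unfolding H by (rule card_Un_le)
  also have "\<dots> \<le> card C ^ 2 + card C * (card C + 1)"
    using inner stars by (rule add_mono)
  also have "\<dots> \<le> 3 * card C ^ 2"
    by (simp add: power2_eq_square algebra_simps)
  finally show ?thesis .
qed

lemma min_le_sqrt_mult:
  fixes a b :: real
  assumes "0 \<le> a" and "0 \<le> b"
  shows "min a b \<le> sqrt (a * b)"
proof (rule real_le_rsqrt)
  show "(min a b)\<^sup>2 \<le> a * b"
    using assms by (simp add: power2_eq_square min_def mult_mono mult_left_mono mult_right_mono)
qed

lemma sqrt_3_le_2: "sqrt 3 \<le> (2::real)"
  by (rule real_le_lsqrt) simp_all

lemma rebuild_cost_le:
  fixes c m h \<mu> m_max \<epsilon> :: real
  assumes "0 < \<epsilon>" and "\<epsilon> \<le> 1" and "0 \<le> c" and "0 \<le> m"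
    and "c \<le> 2 * \<mu>" and "m \<le> m_max" and "h \<le> m" and "h \<le> 3 * c\<^sup>2"
  shows "min (c\<^sup>2) m + h / \<epsilon> \<le> 6 * \<mu> * sqrt m_max / \<epsilon>"
proof -
  define w where "w = c * sqrt m_max"
  have cm: "c * sqrt m \<le> w"
    unfolding w_def using assms by (simp add: mult_left_mono)
  have "min (c\<^sup>2) m \<le> sqrt (c\<^sup>2 * m)"
    using assms by (simp add: min_le_sqrt_mult)
  also have "\<dots> = c * sqrt m"
    using assms by (simp add: real_sqrt_mult)
  finally have building: "min (c\<^sup>2) m \<le> w"
    using cm by linarith
  have "h \<le> min m (3 * c\<^sup>2)"
    using assms by simp
  also have "\<dots> \<le> sqrt (m * (3 * c\<^sup>2))"
    using assms by (simp add: min_le_sqrt_mult)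
  also have "\<dots> = sqrt 3 * (c * sqrt m)"
    using assms by (simp add: real_sqrt_mult mult_ac)
  also have "\<dots> \<le> 2 * w"
    using cm sqrt_3_le_2 assms by (intro mult_mono) auto
  finally have "h / \<epsilon> \<le> 2 * w / \<epsilon>"
    using assms by (simp add: divide_right_mono)
  moreover have "w \<le> w / \<epsilon>"
    using assms unfolding w_def by (simp add: le_divide_eq mult_right_le_one_le)
  moreover have "w \<le> 2 * \<mu> * sqrt m_max"
    using assms unfolding w_def by (simp add: mult_right_mono)
  ultimately have "min (c\<^sup>2) m + h / \<epsilon> \<le> w / \<epsilon> + 2 * w / \<epsilon>"
    using building by linarith
  also have "\<dots> = 3 * w / \<epsilon>"
    by (simp add: field_simps)
  also have "\<dots> \<le> 3 * (2 * \<mu> * sqrt m_max) / \<epsilon>"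
    using \<open>w \<le> 2 * \<mu> * sqrt m_max\<close> assms(1) by (simp add: divide_right_mono)
  finally show ?thesis
    by simp
qed

lemma sum_le_by_potential:
  fixes c P :: "nat \<Rightarrow> real"
  assumes "\<And>i. i < n \<Longrightarrow> c i + P (Suc i) \<le> P i + a" and "P 0 \<le> P n"
  shows "(\<Sum>i<n. c i) \<le> real n * a"
proof -
  have "(\<Sum>i<n. c i) \<le> (\<Sum>i<n. (P i - P (Suc i)) + a)"
    using assms(1) by (intro sum_mono) (simp add: algebra_simps)
  also have "\<dots> = P 0 - P n + real n * a"
    by (simp add: sum.distrib sum_lessThan_telescope')
  finally show ?thesis
    using assms(2) by linarith
qed

locale matching_run =
  fixes \<epsilon> :: real and k :: nat and G :: "nat \<Rightarrow> 'v set set" and M :: "nat \<Rightarrow> 'v set set"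
    and t :: "nat \<Rightarrow> real" and Vc :: "nat \<Rightarrow> 'v set" and H :: "nat \<Rightarrow> 'v set set"
  assumes eps_pos: "0 < \<epsilon>" and eps_less: "\<epsilon> < 1/2" and run: "run \<epsilon> k G M t Vc H"
begin

definition m_max :: nat where
  "m_max = Max ((\<lambda>i. card (G i)) ` {0..k})"

definition fresh :: "nat \<Rightarrow> bool" where
  "fresh j \<longleftrightarrow> approx_mcm (\<epsilon>/4) (M j) (G j) \<and> t j = \<epsilon>/4 * real (card (M j))"

lemma graph_G: "i \<le> k \<Longrightarrow> graph (G i)"
  using run unfolding run_def by blast

lemma finite_G: "i \<le> k \<Longrightarrow> finite (G i)"
  using graph_G unfolding graph_def by blast

lemma card_G_le_m_max: "i \<le> k \<Longrightarrow> card (G i) \<le> m_max"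
  unfolding m_max_def by (intro Max_ge) auto

lemma update_edge:
  assumes "i < k"
  obtains e where "card e = 2" and "G (Suc i) - {e} \<subseteq> G i" and "G i - {e} \<subseteq> G (Suc i)"
    and "e \<in> G i \<or> e \<in> G (Suc i)"
proof -
  obtain e where "card e = 2"
    and "(e \<notin> G i \<and> G (Suc i) = insert e (G i)) \<or> (e \<in> G i \<and> G (Suc i) = G i - {e})"
    using run assms unfolding run_def by blast
  then show thesis
    using that by blast
qed

lemma m_max_pos: "i < k \<Longrightarrow> 1 \<le> m_max"
proof -
  assume "i < k"
  then obtain e where "e \<in> G i \<or> e \<in> G (Suc i)"
    by (rule update_edge)
  then obtain j where "j \<le> k" "G j \<noteq> {}"
    using \<open>i < k\<close> by (metis Suc_leI empty_iff less_imp_le)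
  then show ?thesis
    using finite_G card_G_le_m_max by (metis One_nat_def Suc_leI card_gt_0_iff le_trans)
qed

lemma mm_size_Suc_le: "i < k \<Longrightarrow> mm_size (G (Suc i)) \<le> mm_size (G i) + 1"
  by (rule update_edge, assumption) (rule mm_size_le_remove_edge; simp add: finite_G)

lemma fresh_0: "fresh 0"
  using run unfolding run_def fresh_def by blast

lemma rebuild_step:
  assumes "i < k" and "rebuild t i"
  shows "fresh (Suc i)"
    and "update_cost \<epsilon> G t Vc H i \<le> 1 + 6 * real (mm_size (G (Suc i))) * sqrt (real m_max) / \<epsilon>"
proof -
  let ?V = "Vc (Suc i)" and ?E = "G (Suc i)" and ?H = "H (Suc i)"
  have rb: "vertex_cover ?V ?E" "card ?V \<le> 2 * mm_size ?E" "core_subgraph ?V ?E ?H"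
    "approx_mcm (\<epsilon>/4) (M (Suc i)) ?H" "t (Suc i) = \<epsilon>/4 * real (card (M (Suc i)))"
    using run assms unfolding run_def by auto
  have "graph ?E" and "finite ?E" and "card ?E \<le> m_max"
    using assms graph_G finite_G card_G_le_m_max by simp_all
  have "?H \<subseteq> ?E"
    using rb(3) by (rule core_subgraph_subset)
  have "approx_mcm (\<epsilon>/4) (M (Suc i)) ?E"
    using eps_pos by (intro approx_mcm_supergraph[OF _ rb(4) \<open>?H \<subseteq> ?E\<close>]
        mm_size_le_core_subgraph[OF \<open>graph ?E\<close> rb(1,3)]) simp
  then show "fresh (Suc i)"
    using rb(5) unfolding fresh_def by blast
  have "card ?H \<le> card ?E"
    using \<open>?H \<subseteq> ?E\<close> \<open>finite ?E\<close> by (rule card_mono[rotated])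
  moreover have "card ?H \<le> 3 * card ?V ^ 2"
    using \<open>graph ?E\<close> rb(1,3) unfolding vertex_cover_def by (blast intro: card_core_subgraph_le)
  ultimately have "min ((real (card ?V))^2) (real (card ?E)) + real (card ?H) / \<epsilon>
      \<le> 6 * real (mm_size ?E) * sqrt (real m_max) / \<epsilon>"
    using eps_pos eps_less rb(2) \<open>card ?E \<le> m_max\<close>
    by (intro rebuild_cost_le) (simp_all, metis of_nat_le_iff of_nat_mult of_nat_numeral of_nat_power)
  then show "update_cost \<epsilon> G t Vc H i \<le> 1 + 6 * real (mm_size ?E) * sqrt (real m_max) / \<epsilon>"
    unfolding update_cost_def using assms(2) by (simp add: of_nat_min)
qed

lemma regular_step:
  assumes "i < k" and "\<not> rebuild t i"
  shows "M (Suc i) = M i - (G i - G (Suc i))" and "t (Suc i) = t i - 1"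
    and "update_cost \<epsilon> G t Vc H i = 1"
  using run assms unfolding run_def update_cost_def by auto

lemma regular_step_matching:
  assumes "i < k" and "\<not> rebuild t i" and "matching_of (M i) (G i)"
  shows "matching_of (M (Suc i)) (G (Suc i))" and "card (M i) \<le> card (M (Suc i)) + 1"
proof -
  obtain e where e: "G i - {e} \<subseteq> G (Suc i)"
    using assms(1) by (rule update_edge)
  have M: "M (Suc i) = M i - (G i - G (Suc i))"
    using assms(1,2) by (rule regular_step)
  show "matching_of (M (Suc i)) (G (Suc i))"
    using assms(3) matching_subset unfolding M matching_of_def by blast
  have "finite (M i)"
    using assms(1,3) finite_G unfolding matching_of_def by (meson finite_subset less_imp_le)
  moreover have "card (M i - {e}) \<le> card (M (Suc i))"
    using e \<open>finite (M i)\<close> unfolding M by (intro card_mono) auto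
  ultimately show "card (M i) \<le> card (M (Suc i)) + 1"
    using card_le_Suc_card_Diff_singleton[of "M i" e] by linarith
qed

lemma fresh_mm_size_le:
  assumes "fresh j"
  shows "real (mm_size (G j)) \<le> (1 + \<epsilon>/4) * real (card (M j))"
proof -
  have "real (mm_size (G j)) / (1 + \<epsilon>/4) \<le> real (card (M j))"
    using assms unfolding fresh_def approx_mcm_def by blast
  then show ?thesis
    using eps_pos by (simp add: divide_le_eq mult.commute)
qed

definition invariant :: "nat \<Rightarrow> bool" where
  "invariant j \<longleftrightarrow> matching_of (M j) (G j) \<and> 0 \<le> t j
    \<and> real (mm_size (G j)) + 3 * t j \<le> (1 + \<epsilon>) * real (card (M j))"

lemma fresh_invariant:
  assumes "fresh j"
  shows "invariant j"
proof -
  have "matching_of (M j) (G j)" and t: "t j = \<epsilon>/4 * real (card (M j))"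
    using assms unfolding fresh_def approx_mcm_def by auto
  moreover have "0 \<le> t j"
    unfolding t using eps_pos by simp
  ultimately show ?thesis
    using fresh_mm_size_le[OF assms] unfolding invariant_def by (simp add: algebra_simps)
qed

lemma invariant_Suc:
  assumes "i < k" and "invariant i"
  shows "invariant (Suc i)"
proof (cases "rebuild t i")
  case True
  then show ?thesis
    using assms(1) by (intro fresh_invariant rebuild_step(1))
next
  case False
  have IH: "matching_of (M i) (G i)" "real (mm_size (G i)) + 3 * t i \<le> (1 + \<epsilon>) * real (card (M i))"
    using assms(2) unfolding invariant_def by auto
  have "0 < t i - 1"
    using False unfolding rebuild_def by simp
  moreover have "(1 + \<epsilon>) * real (card (M i)) \<le> (1 + \<epsilon>) * (real (card (M (Suc i))) + 1)"
    using regular_step_matching(2)[OF assms(1) False IH(1)] eps_pos by (intro mult_left_mono) auto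
  ultimately show ?thesis
    using regular_step(2)[OF assms(1) False] regular_step_matching(1)[OF assms(1) False IH(1)]
      mm_size_Suc_le[OF assms(1)] IH(2) eps_less
    unfolding invariant_def by (simp add: algebra_simps)
qed

lemma invariant_at: "j \<le> k \<Longrightarrow> invariant j"
  by (induction j) (simp_all add: fresh_invariant[OF fresh_0] invariant_Suc)

lemma approx_mcm_at: "i \<le> k \<Longrightarrow> approx_mcm \<epsilon> (M i) (G i)"
  using invariant_at[of i] eps_pos unfolding invariant_def approx_mcm_def
  by (simp add: divide_le_eq mult.commute)

definition deficit :: "nat \<Rightarrow> real" where
  "deficit j = real (mm_size (G j)) - 9 * t j / (2 * \<epsilon>)"

definition potential :: "nat \<Rightarrow> real" where
  "potential j = 6 * sqrt (real m_max) / \<epsilon> * max 0 (deficit j)"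

lemma potential_nonneg: "0 \<le> potential j"
  unfolding potential_def using eps_pos by simp

lemma potential_fresh: "fresh j \<Longrightarrow> potential j = 0"
proof -
  assume "fresh j"
  have "(1 + \<epsilon>/4) * real (card (M j)) \<le> 9/8 * real (card (M j))"
    using eps_less by (intro mult_right_mono) auto
  also have "\<dots> = 9 * t j / (2 * \<epsilon>)"
    using \<open>fresh j\<close> eps_pos unfolding fresh_def by (simp add: field_simps)
  finally show "potential j = 0"
    using fresh_mm_size_le[OF \<open>fresh j\<close>] unfolding potential_def deficit_def by simp
qed

lemma mm_size_le_deficit: "rebuild t i \<Longrightarrow> real (mm_size (G i)) \<le> deficit i + 9 / (2 * \<epsilon>)"
  unfolding rebuild_def deficit_def using eps_pos by (simp add: divide_right_mono)

lemma deficit_regular_step: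
  assumes "i < k" and "\<not> rebuild t i"
  shows "deficit (Suc i) \<le> deficit i + 5 / \<epsilon>"
proof -
  have "9 * t (Suc i) / (2 * \<epsilon>) = 9 * t i / (2 * \<epsilon>) - 9 / (2 * \<epsilon>)"
    unfolding regular_step(2)[OF assms] by (simp add: diff_divide_distrib right_diff_distrib)
  then have "deficit (Suc i) \<le> deficit i + 1 + 9 / (2 * \<epsilon>)"
    using mm_size_Suc_le[OF assms(1)] unfolding deficit_def by linarith
  also have "\<dots> \<le> deficit i + 5 / \<epsilon>"
    using eps_pos eps_less by (simp add: field_simps)
  finally show ?thesis .
qed

lemma amortized_step:
  assumes "i < k"
  shows "update_cost \<epsilon> G t Vc H i + potential (Suc i) \<le> potential i + 31 * sqrt (real m_max) / \<epsilon>\<^sup>2"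
proof -
  define r where "r = 6 * sqrt (real m_max) / \<epsilon>"
  define q where "q = sqrt (real m_max) / \<epsilon>\<^sup>2"
  have potential_r: "potential j = r * max 0 (deficit j)" for j
    unfolding potential_def r_def ..
  have "1 \<le> sqrt (real m_max)"
    using m_max_pos[OF assms] by simp
  then have "0 \<le> r" and "r \<le> 3 * q"
    unfolding r_def q_def using eps_pos eps_less by (simp_all add: field_simps power2_eq_square)
  have "\<epsilon>\<^sup>2 \<le> 1"
    using eps_pos eps_less by (simp add: power_le_one)
  then have "1 \<le> q"
    unfolding q_def using \<open>1 \<le> sqrt (real m_max)\<close> eps_pos by (simp add: le_divide_eq del: real_sqrt_ge_1_iff)
  show ?thesis
  proof (cases "rebuild t i")
    case True
    have "r * real (mm_size (G (Suc i))) \<le> r * (deficit i + 9 / (2 * \<epsilon>) + 1)"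
      using mm_size_le_deficit[OF True] mm_size_Suc_le[OF assms] \<open>0 \<le> r\<close> by (intro mult_left_mono) auto
    also have "\<dots> = r * deficit i + 27 * q + r"
      unfolding r_def q_def using eps_pos by (simp add: field_simps power2_eq_square)
    also have "\<dots> \<le> potential i + 27 * q + r"
      unfolding potential_r using \<open>0 \<le> r\<close> by (simp add: mult_left_mono)
    finally have "update_cost \<epsilon> G t Vc H i \<le> 1 + potential i + 27 * q + r"
      using rebuild_step(2)[OF assms True] unfolding r_def by (simp add: mult_ac)
    then show ?thesis
      using potential_fresh[OF rebuild_step(1)[OF assms True]] \<open>r \<le> 3 * q\<close> \<open>1 \<le> q\<close>
      unfolding q_def by linarith
  next
    case False
    have "max 0 (deficit (Suc i)) \<le> max 0 (deficit i) + 5 / \<epsilon>"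
      using deficit_regular_step[OF assms False] eps_pos by (simp add: max_def)
    then have "potential (Suc i) \<le> r * (max 0 (deficit i) + 5 / \<epsilon>)"
      unfolding potential_r using \<open>0 \<le> r\<close> by (rule mult_left_mono)
    also have "\<dots> = potential i + 30 * q"
      unfolding potential_r r_def q_def using eps_pos by (simp add: field_simps power2_eq_square)
    finally show ?thesis
      using regular_step(3)[OF assms False] \<open>1 \<le> q\<close> unfolding q_def by simp
  qed
qed

lemma total_cost_le:
  "(\<Sum>i<k. update_cost \<epsilon> G t Vc H i) \<le> 31 * real k * sqrt (real m_max) / \<epsilon>\<^sup>2"
proof -
  have "potential 0 \<le> potential k"
    using potential_fresh[OF fresh_0] potential_nonneg by simp
  with amortized_step have "(\<Sum>i<k. update_cost \<epsilon> G t Vc H i) \<le> real k * (31 * sqrt (real m_max) / \<epsilon>\<^sup>2)"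
    by (rule sum_le_by_potential)
  then show ?thesis
    by (simp add: mult_ac)
qed

end

theorem theorem4:
  "\<exists>C::real. C > 0 \<and>
     (\<forall>(\<epsilon>::real) (k::nat) (G :: nat \<Rightarrow> 'v set set) M t Vc H.
        0 < \<epsilon> \<and> \<epsilon> < 1/2 \<and> run \<epsilon> k G M t Vc H \<longrightarrow>
        (\<forall>i\<le>k. approx_mcm \<epsilon> (M i) (G i)) \<and>
        (\<Sum>i<k. update_cost \<epsilon> G t Vc H i)
          \<le> C * real k * sqrt (real (Max ((\<lambda>i. card (G i)) ` {0..k}))) / \<epsilon>^2)"
proof -
  have bound: "(\<forall>i\<le>k. approx_mcm \<epsilon> (M i) (G i)) \<and>
      (\<Sum>i<k. update_cost \<epsilon> G t Vc H i)
        \<le> 31 * real k * sqrt (real (Max ((\<lambda>i. card (G i)) ` {0..k}))) / \<epsilon>^2"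
    if "0 < \<epsilon> \<and> \<epsilon> < 1/2 \<and> run \<epsilon> k G M t Vc H"
    for \<epsilon> k and G :: "nat \<Rightarrow> 'v set set" and M t Vc H
  proof -
    interpret matching_run \<epsilon> k G M t Vc H
      using that by unfold_locales auto
    show ?thesis
      using approx_mcm_at total_cost_le unfolding m_max_def by simp
  qed
  show ?thesis
    by (rule exI[of _ 31], rule conjI) (simp, use bound in blast)
qed

end
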